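(* Let $\Pi=(\iota,\tau,\beta)$ be a safety problem. If $\Pi$ has a proof in the incremental forward-backward proof system $\mathbf{FBI}$, then $\Pi$ is safe.
   Context: A first-order vocabulary $\Sigma$ consists of constant, function and relation symbols; $\Sigma'=\{a' : a\in\Sigma\}$ is a disjoint copy, and for a formula $\varphi$ over $\Sigma$, $\varphi'$ denotes $\varphi$ with every symbol replaced by its primed copy. A state is a first-order structure over $\Sigma$. A safety problem is a triple $(\iota,\tau,\beta)$, where $\iota$ (initial states) and $\beta$ (bad states) are closed formulas over $\Sigma$ and $\tau$ (transitions) is a closed formula over $\Sigma\uplus\Sigma'$. A pair of states $(s,t)$ over a common domain is a transition if the structure over $\Sigma\uplus\Sigma'$ interpreting $\Sigma$ as in $s$ and $\Sigma'$ as in $t$ satisfies $\tau$. A trace is a finite sequence of states over a common domain whose consecutive states form transitions. The problem is safe if there is no trace $s_0,\dots,s_k$ with $s_0\models\iota$ and $s_k\models\beta$. $A\Rightarrow B$ means the implication $A\to B$ is valid. $\tau^{-1}$ denotes $\tau$ with each symbol of $\Sigma$ and its primed counterpart swapped. Proofs: a proof of $\Pi$ in a system is a finite tree whose nodes are safety problems, whose root is $\Pi$, and in which each node together with its children is an instance of one of the system's rules, with side conditions valid. $\mathbf{FBI}$ has the rules ($\varphi$ ranges over closed formulas over $\Sigma$): (Ind): no premises; conclusion $(\iota,\tau,\neg\varphi)$; side conditions $\iota\Rightarrow\varphi$ and $\varphi\wedge\tau\Rightarrow\varphi'$. (Cons): premise $(\iota,\tau,\neg\varphi)$; conclusion $(\iota,\tau,\beta)$;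 side condition $\varphi\Rightarrow\neg\beta$. (Inc): premises $(\iota,\tau,\neg\varphi)$ and $(\iota\wedge\varphi,\ \tau\wedge\varphi\wedge\varphi',\ \beta\wedge\varphi)$; conclusion $(\iota,\tau,\beta)$. (Rev): premise $(\beta,\tau^{-1},\iota)$; conclusion $(\iota,\tau,\beta)$. *)

theory Defs
  imports Main
begin

text \<open>A vocabulary Sigma is
  given by the pair of symbol types ('f,'r); the vocabulary Sigma + Sigma' is
  ('f \<times> bool, 'r \<times> bool), where (s,False) is the symbol s and (s,True) its primed copy.\<close>

datatype 'f trm = Var nat | Fn 'f "'f trm list"

datatype ('f, 'r) fm =
    Bot
  | Eq "'f trm" "'f trm"
  | Rel 'r "'f trm list"
  | Neg "('f, 'r) fm"
  | And "('f, 'r) fm" "('f, 'r) fm"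
  | Or "('f, 'r) fm" "('f, 'r) fm"
  | Imp "('f, 'r) fm" "('f, 'r) fm"
  | All nat "('f, 'r) fm"
  | Ex nat "('f, 'r) fm"

fun fvt :: "'f trm \<Rightarrow> nat set" where
  "fvt (Var n) = {n}"
| "fvt (Fn f ts) = (\<Union>t \<in> set ts. fvt t)"

fun fv :: "('f, 'r) fm \<Rightarrow> nat set" where
  "fv Bot = {}"
| "fv (Eq s t) = fvt s \<union> fvt t"
| "fv (Rel r ts) = (\<Union>t \<in> set ts. fvt t)"
| "fv (Neg p) = fv p"
| "fv (And p q) = fv p \<union> fv q"
| "fv (Or p q) = fv p \<union> fv q"
| "fv (Imp p q) = fv p \<union> fv q"
| "fv (All x p) = fv p - {x}"
| "fv (Ex x p) = fv p - {x}"

definition closed :: "('f, 'r) fm \<Rightarrow> bool" where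
  "closed p \<longleftrightarrow> fv p = {}"

text \<open>Formula over Sigma seen as a formula over Sigma + Sigma' (unprimed), its primed
  copy, and the swap of Sigma and Sigma' (used for tau^-1).\<close>

definition unprimed :: "('f, 'r) fm \<Rightarrow> ('f \<times> bool, 'r \<times> bool) fm" where
  "unprimed p = map_fm (\<lambda>f. (f, False)) (\<lambda>r. (r, False)) p"

definition primed :: "('f, 'r) fm \<Rightarrow> ('f \<times> bool, 'r \<times> bool) fm" where
  "primed p = map_fm (\<lambda>f. (f, True)) (\<lambda>r. (r, True)) p"

definition swap_primes :: "('f \<times> bool, 'r \<times> bool) fm \<Rightarrow> ('f \<times> bool, 'r \<times> bool) fm" where
  "swap_primes p = map_fm (\<lambda>(f, b). (f, \<not> b)) (\<lambda>(r, b). (r, \<not> b)) p"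

type_synonym ('f, 'r, 'd) struct = "('f \<Rightarrow> 'd list \<Rightarrow> 'd) \<times> ('r \<Rightarrow> 'd list \<Rightarrow> bool)"

fun evalt :: "('f \<Rightarrow> 'd list \<Rightarrow> 'd) \<Rightarrow> (nat \<Rightarrow> 'd) \<Rightarrow> 'f trm \<Rightarrow> 'd" where
  "evalt F v (Var n) = v n"
| "evalt F v (Fn f ts) = F f (map (evalt F v) ts)"

fun eval :: "('f, 'r, 'd) struct \<Rightarrow> (nat \<Rightarrow> 'd) \<Rightarrow> ('f, 'r) fm \<Rightarrow> bool" where
  "eval S v Bot = False"
| "eval S v (Eq s t) = (evalt (fst S) v s = evalt (fst S) v t)"
| "eval S v (Rel r ts) = snd S r (map (evalt (fst S) v) ts)"
| "eval S v (Neg p) = (\<not> eval S v p)"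
| "eval S v (And p q) = (eval S v p \<and> eval S v q)"
| "eval S v (Or p q) = (eval S v p \<or> eval S v q)"
| "eval S v (Imp p q) = (eval S v p \<longrightarrow> eval S v q)"
| "eval S v (All x p) = (\<forall>d. eval S (v(x := d)) p)"
| "eval S v (Ex x p) = (\<exists>d. eval S (v(x := d)) p)"

definition models :: "('f, 'r, 'd) struct \<Rightarrow> ('f, 'r) fm \<Rightarrow> bool" where
  "models S p \<longleftrightarrow> (\<forall>v. eval S v p)"

definition valid_imp :: "'d itself \<Rightarrow> ('f, 'r) fm \<Rightarrow> ('f, 'r) fm \<Rightarrow> bool" where
  "valid_imp D A B \<longleftrightarrow> (\<forall>S :: ('f, 'r, 'd) struct. models S (Imp A B))"

definition combine :: "('f, 'r, 'd) struct \<Rightarrow> ('f, 'r, 'd) struct \<Rightarrow> ('f \<times> bool, 'r \<times> bool, 'd) struct" where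
  "combine s t =
     ((\<lambda>(f, b). if b then fst t f else fst s f), (\<lambda>(r, b). if b then snd t r else snd s r))"

definition transition :: "('f \<times> bool, 'r \<times> bool) fm \<Rightarrow> ('f, 'r, 'd) struct \<Rightarrow> ('f, 'r, 'd) struct \<Rightarrow> bool" where
  "transition \<tau> s t \<longleftrightarrow> models (combine s t) \<tau>"

definition is_trace :: "('f \<times> bool, 'r \<times> bool) fm \<Rightarrow> ('f, 'r, 'd) struct list \<Rightarrow> bool" where
  "is_trace \<tau> xs \<longleftrightarrow> (\<forall>i. Suc i < length xs \<longrightarrow> transition \<tau> (xs ! i) (xs ! Suc i))"

type_synonym ('f, 'r) problem = "('f, 'r) fm \<times> ('f \<times> bool, 'r \<times> bool) fm \<times> ('f, 'r) fm"

definition safety_problem :: "('f, 'r) problem \<Rightarrow> bool" where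
  "safety_problem P \<longleftrightarrow> (case P of (\<iota>, \<tau>, \<beta>) \<Rightarrow> closed \<iota> \<and> closed \<tau> \<and> closed \<beta>)"

definition safe :: "'d itself \<Rightarrow> ('f, 'r) problem \<Rightarrow> bool" where
  "safe D P \<longleftrightarrow> (case P of (\<iota>, \<tau>, \<beta>) \<Rightarrow>
     \<not> (\<exists>xs :: ('f, 'r, 'd) struct list.
           xs \<noteq> [] \<and> is_trace \<tau> xs \<and> models (hd xs) \<iota> \<and> models (last xs) \<beta>))"

text \<open>Derivability in FBI (existence of a finite proof tree), side conditions being
  validity over structures with domain 'd. Every node is required to be a safety problem.\<close>

inductive FBI :: "'d itself \<Rightarrow> ('f, 'r) problem \<Rightarrow> bool" for D :: "'d itself" where
  Ind: "\<lbrakk> safety_problem (\<iota>, \<tau>, Neg \<phi>);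
          valid_imp D \<iota> \<phi>;
          valid_imp D (And (unprimed \<phi>) \<tau>) (primed \<phi>) \<rbrakk>
        \<Longrightarrow> FBI D (\<iota>, \<tau>, Neg \<phi>)"
| Cons: "\<lbrakk> safety_problem (\<iota>, \<tau>, \<beta>); FBI D (\<iota>, \<tau>, Neg \<phi>);
           valid_imp D \<phi> (Neg \<beta>) \<rbrakk>
        \<Longrightarrow> FBI D (\<iota>, \<tau>, \<beta>)"
| Inc: "\<lbrakk> safety_problem (\<iota>, \<tau>, \<beta>); FBI D (\<iota>, \<tau>, Neg \<phi>);
          FBI D (And \<iota> \<phi>, And \<tau> (And (unprimed \<phi>) (primed \<phi>)), And \<beta> \<phi>) \<rbrakk>
        \<Longrightarrow> FBI D (\<iota>, \<tau>, \<beta>)"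
| Rev: "\<lbrakk> safety_problem (\<iota>, \<tau>, \<beta>); FBI D (\<beta>, swap_primes \<tau>, \<iota>) \<rbrakk>
        \<Longrightarrow> FBI D (\<iota>, \<tau>, \<beta>)"

end

theory Submission
  imports Defs
begin

text \<open>Each rule of FBI is sound for the semantic notion of safety, so soundness follows by
  induction on the proof tree. Ind is the usual inductive-invariant argument. Cons weakens the
  bad states. For Inc, a trace reaching a bad state either leaves \<open>\<phi>\<close> somewhere, and its prefix
  up to that point refutes the first premise, or stays inside \<open>\<phi>\<close> throughout, and is then a
  trace of the restricted problem of the second premise. Rev reads traces backwards, which
  swaps the two copies of the vocabulary in \<open>\<tau>\<close>.\<close>

lemma evalt_map_trm: "evalt F v (map_trm f t) = evalt (F \<circ> f) v t"
  by (induction t) (auto cong: map_cong)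

lemma eval_map_fm: "eval S v (map_fm f g p) = eval (fst S \<circ> f, snd S \<circ> g) v p"
  by (induction p arbitrary: v) (auto simp: evalt_map_trm comp_def[of "evalt _ _"])

lemma evalt_cong: "\<forall>x \<in> fvt t. v x = w x \<Longrightarrow> evalt F v t = evalt F w t"
  by (induction t) (auto cong: map_cong)

lemma eval_cong: "\<forall>x \<in> fv p. v x = w x \<Longrightarrow> eval S v p = eval S w p"
proof (induction p arbitrary: v w)
  case (Rel r ts)
  then have "map (evalt (fst S) v) ts = map (evalt (fst S) w) ts"
    by (intro map_cong) (auto intro: evalt_cong)
  then show ?case by (simp only: eval.simps)
next
  case (All x p)
  then have "eval S (v(x := d)) p = eval S (w(x := d)) p" for d
    by (intro All.IH) auto
  then show ?case by simp
next
  case (Ex x p)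
  then have "eval S (v(x := d)) p = eval S (w(x := d)) p" for d
    by (intro Ex.IH) auto
  then show ?case by simp
next
  case (Eq s t)
  then show ?case using evalt_cong[of s v w] evalt_cong[of t v w] by auto
qed (simp; blast)+

lemma closed_models_Neg: "closed p \<Longrightarrow> models S (Neg p) \<longleftrightarrow> \<not> models S p"
  unfolding models_def closed_def by (metis empty_iff eval.simps(4) eval_cong)

lemma models_And [simp]: "models S (And p q) \<longleftrightarrow> models S p \<and> models S q"
  by (auto simp: models_def)

lemma valid_impD:
  "valid_imp (D :: 'd itself) A B \<Longrightarrow> eval (S :: ('f, 'r, 'd) struct) v A \<Longrightarrow> eval S v B"
  unfolding valid_imp_def models_def by (metis eval.simps(7))

lemma models_valid_imp:
  "valid_imp (D :: 'd itself) A B \<Longrightarrow> models (S :: ('f, 'r, 'd) struct) A \<Longrightarrow> models S B"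
  unfolding models_def by (blast dest: valid_impD)

lemma eval_combine_unprimed [simp]: "eval (combine s t) v (unprimed p) = eval s v p"
proof -
  have "(fst (combine s t) \<circ> (\<lambda>f. (f, False)), snd (combine s t) \<circ> (\<lambda>r. (r, False))) = s"
    by (simp add: combine_def comp_def)
  then show ?thesis unfolding unprimed_def eval_map_fm by simp
qed

lemma eval_combine_primed [simp]: "eval (combine s t) v (primed p) = eval t v p"
proof -
  have "(fst (combine s t) \<circ> (\<lambda>f. (f, True)), snd (combine s t) \<circ> (\<lambda>r. (r, True))) = t"
    by (simp add: combine_def comp_def)
  then show ?thesis unfolding primed_def eval_map_fm by simp
qed

lemma eval_combine_swap_primes: "eval (combine s t) v (swap_primes p) = eval (combine t s) v p"
proof -
  have "(fst (combine s t) \<circ> (\<lambda>(f, b). (f, \<not> b)), snd (combine s t) \<circ> (\<lambda>(r, b). (r, \<not> b)))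
      = combine t s"
    by (auto simp: combine_def fun_eq_iff)
  then show ?thesis unfolding swap_primes_def eval_map_fm by simp
qed

lemma transition_swap_primes: "transition (swap_primes \<tau>) s t \<longleftrightarrow> transition \<tau> t s"
  by (simp add: transition_def models_def eval_combine_swap_primes)

lemma transition_restrict:
  "transition (And \<tau> (And (unprimed \<phi>) (primed \<phi>))) s t \<longleftrightarrow>
     transition \<tau> s t \<and> models s \<phi> \<and> models t \<phi>"
  by (auto simp: transition_def models_def)

lemma transition_preserves:
  assumes "valid_imp (D :: 'd itself) (And (unprimed \<phi>) \<tau>) (primed \<phi>)"
    and "transition \<tau> s t" and "models s \<phi>"
  shows "models (t :: ('f, 'r, 'd) struct) \<phi>"
  using assms valid_impD[OF assms(1), of "combine s t"]
  by (auto simp: transition_def models_def)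

lemma is_trace_take: "is_trace \<tau> xs \<Longrightarrow> is_trace \<tau> (take n xs)"
  by (simp add: is_trace_def)

lemma is_trace_rev: "is_trace \<tau> xs \<Longrightarrow> is_trace (swap_primes \<tau>) (rev xs)"
  unfolding is_trace_def transition_swap_primes
proof (intro allI impI)
  fix i
  assume tr: "\<forall>i. Suc i < length xs \<longrightarrow> transition \<tau> (xs ! i) (xs ! Suc i)"
    and i: "Suc i < length (rev xs)"
  let ?j = "length xs - Suc (Suc i)"
  have "rev xs ! i = xs ! Suc ?j" "rev xs ! Suc i = xs ! ?j"
    using i by (auto simp: rev_nth Suc_diff_Suc)
  then show "transition \<tau> (rev xs ! Suc i) (rev xs ! i)"
    using i tr by auto
qed

lemma is_trace_invariant:
  assumes "is_trace \<tau> xs" and "xs \<noteq> []" and "P (hd xs)"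
    and step: "\<And>s t. transition \<tau> s t \<Longrightarrow> P s \<Longrightarrow> P t"
  shows "\<forall>x \<in> set xs. P x"
proof -
  have "P (xs ! i)" if "i < length xs" for i
    using that
  proof (induction i)
    case 0
    then show ?case using assms(2,3) by (simp add: hd_conv_nth)
  next
    case (Suc i)
    then show ?case
      using assms(1) step[of "xs ! i" "xs ! Suc i"] unfolding is_trace_def by simp
  qed
  then show ?thesis by (metis in_set_conv_nth)
qed

lemma safeI:
  assumes "\<And>xs :: ('f, 'r, 'd) struct list.
    xs \<noteq> [] \<Longrightarrow> is_trace \<tau> xs \<Longrightarrow> models (hd xs) \<iota> \<Longrightarrow> models (last xs) \<beta> \<Longrightarrow> False"
  shows "safe TYPE('d) (\<iota>, \<tau>, \<beta>)"
  using assms unfolding safe_def by auto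

lemma safeD:
  assumes "safe TYPE('d) (\<iota>, \<tau>, \<beta>)" and "xs \<noteq> []" and "is_trace \<tau> xs"
    and "models (hd xs) \<iota>" and "models (last (xs :: ('f, 'r, 'd) struct list)) \<beta>"
  shows False
  using assms unfolding safe_def by auto

lemma safe_inductive_invariant:
  fixes \<iota> :: "('f, 'r) fm"
  assumes "valid_imp TYPE('d) \<iota> \<phi>" and "valid_imp TYPE('d) (And (unprimed \<phi>) \<tau>) (primed \<phi>)"
  shows "safe TYPE('d) (\<iota>, \<tau>, Neg \<phi>)"
proof (rule safeI)
  fix xs :: "('f, 'r, 'd) struct list"
  assume "xs \<noteq> []" "is_trace \<tau> xs" "models (hd xs) \<iota>" "models (last xs) (Neg \<phi>)"
  moreover from this have "\<forall>x \<in> set xs. models x \<phi>"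
    using assms by (intro is_trace_invariant) (auto intro: models_valid_imp transition_preserves)
  ultimately show False by (auto simp: models_def)
qed

lemma safe_consequence:
  fixes \<iota> :: "('f, 'r) fm"
  assumes "safe TYPE('d) (\<iota>, \<tau>, Neg \<phi>)" and "valid_imp TYPE('d) \<phi> (Neg \<beta>)"
  shows "safe TYPE('d) (\<iota>, \<tau>, \<beta>)"
proof (rule safeI)
  fix xs :: "('f, 'r, 'd) struct list"
  assume xs: "xs \<noteq> []" "is_trace \<tau> xs" "models (hd xs) \<iota>" and "models (last xs) \<beta>"
  then have "models (last xs) (Neg \<phi>)"
    using valid_impD[OF assms(2), of "last xs"] by (auto simp: models_def)
  with xs show False by (rule safeD[OF assms(1)])
qed

lemma safe_incremental:
  fixes \<iota> :: "('f, 'r) fm"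
  assumes "closed \<phi>" and "safe TYPE('d) (\<iota>, \<tau>, Neg \<phi>)"
    and "safe TYPE('d) (And \<iota> \<phi>, And \<tau> (And (unprimed \<phi>) (primed \<phi>)), And \<beta> \<phi>)"
  shows "safe TYPE('d) (\<iota>, \<tau>, \<beta>)"
proof (rule safeI)
  fix xs :: "('f, 'r, 'd) struct list"
  assume xs: "xs \<noteq> []" "is_trace \<tau> xs" "models (hd xs) \<iota>" "models (last xs) \<beta>"
  show False
  proof (cases "\<forall>i < length xs. models (xs ! i) \<phi>")
    case True
    have "is_trace (And \<tau> (And (unprimed \<phi>) (primed \<phi>))) xs"
      using xs(2) True unfolding is_trace_def transition_restrict by auto
    moreover have "models (hd xs) \<phi>" "models (last xs) \<phi>"
      using xs(1) True by (auto simp: hd_conv_nth last_conv_nth)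
    ultimately show False using assms(3) xs by (auto elim: safeD)
  next
    case False
    then obtain i where i: "i < length xs" "\<not> models (xs ! i) \<phi>" by auto
    have "last (take (Suc i) xs) = xs ! i"
      using i(1) by (simp add: take_Suc_conv_app_nth)
    moreover have "models (xs ! i) (Neg \<phi>)"
      \<comment> \<open>\<open>models\<close> quantifies over all valuations, so this needs \<open>\<phi>\<close> closed\<close>
      using i(2) by (simp add: closed_models_Neg[OF assms(1)])
    ultimately have "models (last (take (Suc i) xs)) (Neg \<phi>)"
      by simp
    then show False
      by (intro safeD[OF assms(2)]) (simp_all add: xs is_trace_take)
  qed
qed

lemma safe_reverse:
  fixes \<iota> :: "('f, 'r) fm"
  assumes "safe TYPE('d) (\<beta>, swap_primes \<tau>, \<iota>)"
  shows "safe TYPE('d) (\<iota>, \<tau>, \<beta>)"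
proof (rule safeI)
  fix xs :: "('f, 'r, 'd) struct list"
  assume "xs \<noteq> []" "is_trace \<tau> xs" "models (hd xs) \<iota>" "models (last xs) \<beta>"
  then show False
    by (intro safeD[OF assms, of "rev xs"]) (simp_all add: is_trace_rev hd_rev last_rev)
qed

lemma FBI_closed_bad: "FBI D (\<iota>, \<tau>, \<beta>) \<Longrightarrow> closed \<beta>"
  by (cases rule: FBI.cases) (auto simp: safety_problem_def)

lemma FBI_safe: "FBI TYPE('d) P \<Longrightarrow> safe TYPE('d) P"
proof (induction rule: FBI.induct)
  case (Ind \<iota> \<tau> \<phi>)
  show ?case using Ind.hyps(2,3) by (rule safe_inductive_invariant)
next
  case (Cons \<iota> \<tau> \<beta> \<phi>)
  show ?case using Cons.IH Cons.hyps(3) by (rule safe_consequence)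
next
  case (Inc \<iota> \<tau> \<beta> \<phi>)
  have "closed \<phi>"
    using FBI_closed_bad[OF Inc.hyps(2)] by (simp add: closed_def)
  then show ?case using Inc.IH by (rule safe_incremental)
next
  case (Rev \<iota> \<tau> \<beta>)
  show ?case using Rev.IH by (rule safe_reverse)
qed

theorem theorem4p10:
  fixes P :: "('f, 'r) problem"
  assumes "safety_problem P"
    and "FBI TYPE('d) P"
  shows "safe TYPE('d) P"
  using assms(2) by (rule FBI_safe)

end
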